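(* Let $\alpha>1$. Let $\mathcal{A}:\mathcal{D}\mapsto(\mathcal{A}_1(\mathcal{D}),\mathcal{A}_2(\mathcal{D}))\in\mathcal{Z}_1\times\mathcal{Z}_2$ be a randomized algorithm whose first output satisfies $D_\alpha(\mathcal{A}_1(\mathcal{D})\,\|\,\mathcal{A}_1(\mathcal{D}'))\le\varepsilon_1$ for all adjacent datasets $\mathcal{D},\mathcal{D}'$ (the two outputs $\mathcal{A}_1(\mathcal{D}),\mathcal{A}_2(\mathcal{D})$ may be dependent). Let $\mathcal{B}:\mathcal{Z}_1\times\mathcal{Z}_2\to\mathcal{W}$ be a randomized algorithm satisfying $\sup_{\mathbf{z}_1,\mathbf{z}_2,\mathbf{z}_2'}D_\alpha(\mathcal{B}(\mathbf{z}_1,\mathbf{z}_2)\,\|\,\mathcal{B}(\mathbf{z}_1,\mathbf{z}_2'))\le\varepsilon_2$. Assume the randomness used by $\mathcal{A}$ and $\mathcal{B}$ is independent (and that all relevant densities exist). Then for all adjacent $\mathcal{D},\mathcal{D}'$, $$D_\alpha\big((\mathcal{A}_1(\mathcal{D}),\mathcal{B}(\mathcal{A}(\mathcal{D})))\,\big\|\,(\mathcal{A}_1(\mathcal{D}'),\mathcal{B}(\mathcal{A}(\mathcal{D}')))\big)\le\varepsilon_1+\varepsilon_2,$$ i.e. the pair jointly satisfies $(\alpha,\varepsilon_1+\varepsilon_2)$-Rényi DP.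
   Context: For $\alpha>1$ the Rényi divergence between random variables $X\sim P$, $Y\sim Q$ is $D_\alpha(X\|Y)=\frac{1}{\alpha-1}\log\mathbb{E}_{x\sim Q}[(P(x)/Q(x))^\alpha]$. An algorithm is $(\alpha,\varepsilon)$-Rényi DP if its output distributions on any two adjacent datasets have Rényi divergence of order $\alpha$ at most $\varepsilon$; here "adjacent" refers to an arbitrary fixed symmetric adjacency relation on datasets. *)

theory Defs
  imports "HOL-Probability.Probability"
begin

definition renyi_div :: "real \<Rightarrow> 'a measure \<Rightarrow> 'a measure \<Rightarrow> ereal" where
  "renyi_div \<alpha> P Q =
     (if sets P = sets Q \<and> absolutely_continuous Q P then
        (let I = (\<integral>\<^sup>+ x. ennreal ((enn2real (RN_deriv Q P x)) powr \<alpha>) \<partial>Q)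
         in if I = \<infinity> then \<infinity> else ereal (ln (enn2real I) / (\<alpha> - 1)))
      else \<infinity>)"

end

theory Submission
  imports Defs
begin

text \<open>For densities p and q, exp((\<alpha>-1) D_\<alpha>(p\<parallel>q)) = \<integral> p^\<alpha> q^(1-\<alpha>), and (x, y) \<mapsto> x^\<alpha> y^(1-\<alpha>)
  is jointly convex and 1-homogeneous. Let a, a' be the densities of A(D), A(D') and b_z that of
  B(z). Given the first output z1, the released w has density \<integral> a(z1, s) b_(z1,s)(w) ds, a
  mixture of the kernel b_(z1,_). Jensen's inequality with respect to the product of the mixing
  densities a(z1,_) and a'(z1,_) bounds the conditional Renyi integral by e^((\<alpha>-1)\<epsilon>2) times the
  integrand evaluated at the marginal densities of z1. Integrating over z1 and using the bound on
  the first output gives e^((\<alpha>-1)(\<epsilon>1+\<epsilon>2)).\<close>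

text \<open>For densities p and q of P and Q, \<integral> renyi_integrand \<alpha> p q equals E_Q[(dP/dQ)^\<alpha>]; the value
  \<infinity> at x > 0 = y makes the integral infinite exactly when P is not absolutely continuous
  with respect to Q.\<close>
definition renyi_integrand :: "real \<Rightarrow> ennreal \<Rightarrow> ennreal \<Rightarrow> ennreal" where
  "renyi_integrand \<alpha> x y = (if x = 0 then 0 else if y = 0 then \<infinity>
      else ennreal (enn2real x powr \<alpha> * enn2real y powr (1 - \<alpha>)))"

lemma measurable_renyi_integrand[measurable]:
  assumes [measurable]: "f \<in> borel_measurable M" "g \<in> borel_measurable M"
  shows "(\<lambda>x. renyi_integrand \<alpha> (f x) (g x)) \<in> borel_measurable M"
  unfolding renyi_integrand_def by measurable

lemma renyi_integrand_eq_top_iff: "renyi_integrand \<alpha> x y = \<top> \<longleftrightarrow> x \<noteq> 0 \<and> y = 0"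
  by (simp add: renyi_integrand_def)

lemma renyi_integrand_eq_0_iff:
  assumes "x \<noteq> \<infinity>" "y \<noteq> \<infinity>"
  shows "renyi_integrand \<alpha> x y = 0 \<longleftrightarrow> x = 0"
  using assms by (auto simp: renyi_integrand_def enn2real_eq_0_iff)

lemma renyi_integrand_ennreal:
  assumes "x > 0" "y > 0"
  shows "renyi_integrand \<alpha> (ennreal x) (ennreal y) = ennreal (x powr \<alpha> * y powr (1 - \<alpha>))"
  using assms by (simp add: renyi_integrand_def)

lemma ennreal_pos_cases:
  fixes x :: ennreal
  assumes "x \<noteq> 0" "x \<noteq> \<infinity>"
  obtains r where "x = ennreal r" "r > 0"
  using assms by (cases x rule: ennreal_cases) auto

lemma renyi_integrand_scale:
  assumes "c > 0" "d > 0"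
  shows "renyi_integrand \<alpha> (ennreal c * x) (ennreal d * y)
       = ennreal (c powr \<alpha> * d powr (1 - \<alpha>)) * renyi_integrand \<alpha> x y"
proof (cases "x = 0 \<or> y = 0")
  case True
  then show ?thesis using assms by (auto simp: renyi_integrand_def ennreal_mult_top)
next
  case False
  then show ?thesis using assms
    by (simp add: renyi_integrand_def enn2real_mult powr_mult ennreal_mult'[symmetric] mult_ac)
qed

lemma nn_integral_renyi_integrand_eq_top:
  assumes [measurable]: "f \<in> borel_measurable M" "g \<in> borel_measurable M"
    and not_ac: "\<not> (AE x in M. g x = 0 \<longrightarrow> f x = 0)"
  shows "(\<integral>\<^sup>+ x. renyi_integrand \<alpha> (f x) (g x) \<partial>M) = \<infinity>"
proof -
  have "\<not> (AE x in M. renyi_integrand \<alpha> (f x) (g x) \<noteq> \<infinity>)"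
  proof
    assume "AE x in M. renyi_integrand \<alpha> (f x) (g x) \<noteq> \<infinity>"
    then have "AE x in M. g x = 0 \<longrightarrow> f x = 0"
      by eventually_elim (auto simp: renyi_integrand_eq_top_iff)
    with not_ac show False ..
  qed
  moreover have "(\<lambda>x. renyi_integrand \<alpha> (f x) (g x)) \<in> borel_measurable M"
    by measurable
  ultimately show ?thesis
    using nn_integral_PInf_AE by blast
qed

text \<open>The tangent plane of the convex, 1-homogeneous function x^\<alpha> y^(1-\<alpha>) along the ray
  through (t, 1); it follows from Young's inequality with exponents \<alpha> and \<alpha>/(\<alpha>-1).\<close>
lemma powr_tangent_le:
  fixes \<alpha> x y t :: real
  assumes "\<alpha> > 1" "x > 0" "y > 0" "t > 0"
  shows "\<alpha> * t powr (\<alpha> - 1) * x \<le> x powr \<alpha> * y powr (1 - \<alpha>) + (\<alpha> - 1) * t powr \<alpha> * y"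
proof -
  define q where "q = \<alpha> / (\<alpha> - 1)"
  have q: "q > 1" "1/\<alpha> + 1/q = 1" using assms by (auto simp: q_def field_simps)
  define A where "A = x * y powr ((1 - \<alpha>) / \<alpha>)"
  define B where "B = t powr (\<alpha> - 1) * y powr ((\<alpha> - 1) / \<alpha>)"
  have "A * B \<le> A powr \<alpha> / \<alpha> + B powr q / q"
    using Youngs_inequality[of \<alpha> q A B] q assms by (auto simp: A_def B_def)
  moreover have "A * B = x * t powr (\<alpha> - 1)"
  proof -
    have "y powr ((1 - \<alpha>) / \<alpha>) * y powr ((\<alpha> - 1) / \<alpha>) = 1"
      using assms by (simp add: powr_add[symmetric] field_simps)
    then show ?thesis unfolding A_def B_def by (simp add: algebra_simps)
  qed
  moreover have "A powr \<alpha> = x powr \<alpha> * y powr (1 - \<alpha>)"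
    using assms by (simp add: A_def powr_mult powr_powr)
  moreover have "B powr q = t powr \<alpha> * y"
    using assms q by (simp add: B_def q_def powr_mult powr_powr)
  ultimately have "x * t powr (\<alpha> - 1) \<le> x powr \<alpha> * y powr (1 - \<alpha>) / \<alpha> + t powr \<alpha> * y / q"
    by simp
  then show ?thesis
    using assms by (simp add: q_def field_simps)
qed

lemma renyi_integrand_tangent:
  assumes "\<alpha> > 1" "t > 0" "x \<noteq> \<infinity>" "y \<noteq> \<infinity>"
  shows "ennreal (\<alpha> * t powr (\<alpha> - 1)) * x \<le> renyi_integrand \<alpha> x y + ennreal ((\<alpha> - 1) * t powr \<alpha>) * y"
proof (cases "x = 0 \<or> y = 0")
  case True
  then show ?thesis by (auto simp: renyi_integrand_def)
next
  case False
  then obtain x' y' where "x = ennreal x'" "x' > 0" "y = ennreal y'" "y' > 0"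
    using assms by (metis ennreal_pos_cases)
  with powr_tangent_le[of \<alpha> x' y' t] assms show ?thesis
    by (simp add: renyi_integrand_ennreal ennreal_mult'[symmetric] ennreal_plus[symmetric] del: ennreal_plus)
qed

text \<open>Jensen's inequality, obtained by integrating the tangent plane of renyi_integrand at the
  ray through (\<integral>X, \<integral>Y).\<close>
lemma renyi_integrand_nn_integral_le_pos:
  assumes \<alpha>: "\<alpha> > 1" and [measurable]: "X \<in> borel_measurable M" "Y \<in> borel_measurable M"
    and x0: "integral\<^sup>N M X = ennreal x0" "x0 > 0" and y0: "integral\<^sup>N M Y = ennreal y0" "y0 > 0"
  shows "renyi_integrand \<alpha> (integral\<^sup>N M X) (integral\<^sup>N M Y)
       \<le> (\<integral>\<^sup>+ x. renyi_integrand \<alpha> (X x) (Y x) \<partial>M)"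
proof -
  define t where "t = x0 / y0"
  have t: "t > 0" using x0 y0 by (simp add: t_def)
  have "AE x in M. X x \<noteq> \<infinity>" "AE x in M. Y x \<noteq> \<infinity>"
    using nn_integral_PInf_AE[OF assms(2)] nn_integral_PInf_AE[OF assms(3)] x0 y0 by simp_all
  then have "ennreal (\<alpha> * t powr (\<alpha> - 1)) * integral\<^sup>N M X
      \<le> (\<integral>\<^sup>+ x. renyi_integrand \<alpha> (X x) (Y x) + ennreal ((\<alpha> - 1) * t powr \<alpha>) * Y x \<partial>M)"
    by (subst nn_integral_cmult[symmetric], measurable)
      (intro nn_integral_mono_AE, auto intro!: renyi_integrand_tangent \<alpha> t)
  also have "\<dots> = (\<integral>\<^sup>+ x. renyi_integrand \<alpha> (X x) (Y x) \<partial>M)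
      + ennreal ((\<alpha> - 1) * t powr \<alpha>) * integral\<^sup>N M Y"
    by (simp add: nn_integral_add nn_integral_cmult)
  finally have tangent: "ennreal (\<alpha> * t powr (\<alpha> - 1) * x0)
      \<le> (\<integral>\<^sup>+ x. renyi_integrand \<alpha> (X x) (Y x) \<partial>M) + ennreal ((\<alpha> - 1) * t powr \<alpha> * y0)"
    using x0 y0 t \<alpha> by (simp add: ennreal_mult'[symmetric])
  have value_at_t: "t powr (\<alpha> - 1) * x0 = x0 powr \<alpha> * y0 powr (1 - \<alpha>)"
    "t powr \<alpha> * y0 = x0 powr \<alpha> * y0 powr (1 - \<alpha>)"
    using x0 y0 by (simp_all add: t_def powr_divide powr_diff powr_minus_divide field_simps)
  show ?thesis
  proof (cases "(\<integral>\<^sup>+ x. renyi_integrand \<alpha> (X x) (Y x) \<partial>M) = \<infinity>")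
    case False
    then obtain g where g: "(\<integral>\<^sup>+ x. renyi_integrand \<alpha> (X x) (Y x) \<partial>M) = ennreal g" "g \<ge> 0"
      by (cases "(\<integral>\<^sup>+ x. renyi_integrand \<alpha> (X x) (Y x) \<partial>M)" rule: ennreal_cases) auto
    have "\<alpha> * t powr (\<alpha> - 1) * x0 \<le> g + (\<alpha> - 1) * t powr \<alpha> * y0"
      using tangent g t \<alpha> x0 y0 by (simp add: ennreal_plus[symmetric] del: ennreal_plus)
    then have "x0 powr \<alpha> * y0 powr (1 - \<alpha>) \<le> g"
      using value_at_t by (simp add: algebra_simps)
    then show ?thesis using x0 y0 g by (simp add: renyi_integrand_ennreal)
  qed simp
qed

lemma renyi_integrand_nn_integral_le:
  assumes \<alpha>: "\<alpha> > 1" and [measurable]: "X \<in> borel_measurable M" "Y \<in> borel_measurable M"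
    and X_fin: "integral\<^sup>N M X \<noteq> \<infinity>" and Y_fin: "integral\<^sup>N M Y \<noteq> \<infinity>"
  shows "renyi_integrand \<alpha> (integral\<^sup>N M X) (integral\<^sup>N M Y)
       \<le> (\<integral>\<^sup>+ x. renyi_integrand \<alpha> (X x) (Y x) \<partial>M)"
proof -
  consider "integral\<^sup>N M X = 0" | "integral\<^sup>N M X \<noteq> 0" "integral\<^sup>N M Y = 0"
    | "integral\<^sup>N M X \<noteq> 0" "integral\<^sup>N M Y \<noteq> 0" by blast
  then show ?thesis
  proof cases
    case 1
    then show ?thesis by (simp add: renyi_integrand_def)
  next
    case 2
    then have Y0: "AE x in M. Y x = 0" and X_nz: "\<not> (AE x in M. X x = 0)"
      by (simp_all add: nn_integral_0_iff_AE)
    have "\<not> (AE x in M. Y x = 0 \<longrightarrow> X x = 0)"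
    proof
      assume "AE x in M. Y x = 0 \<longrightarrow> X x = 0"
      with Y0 have "AE x in M. X x = 0"
        by eventually_elim simp
      with X_nz show False ..
    qed
    then show ?thesis
      using nn_integral_renyi_integrand_eq_top[OF assms(2,3)] by simp
  next
    case 3
    then obtain x0 y0 where "integral\<^sup>N M X = ennreal x0" "x0 > 0"
      and "integral\<^sup>N M Y = ennreal y0" "y0 > 0"
      using X_fin Y_fin by (metis ennreal_pos_cases)
    then show ?thesis
      by (rule renyi_integrand_nn_integral_le_pos[OF \<alpha> assms(2,3)])
  qed
qed

lemma nn_integral_eq_1_if_prob_space_density:
  assumes [measurable]: "p \<in> borel_measurable M" and "prob_space (density M p)"
  shows "integral\<^sup>N M p = 1"
proof -
  have "1 = emeasure (density M p) (space M)"
    using prob_space.emeasure_space_1[OF assms(2)] by simp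
  also have "\<dots> = (\<integral>\<^sup>+ x. p x * indicator (space M) x \<partial>M)"
    by (simp add: emeasure_density)
  also have "\<dots> = integral\<^sup>N M p"
    by (intro nn_integral_cong) simp
  finally show ?thesis by simp
qed

lemma AE_finite_if_prob_space_density:
  assumes "p \<in> borel_measurable M" and "prob_space (density M p)"
  shows "AE x in M. p x \<noteq> \<infinity>"
  using nn_integral_eq_1_if_prob_space_density[OF assms] assms(1)
  by (intro nn_integral_PInf_AE) auto

lemma absolutely_continuous_density_iff:
  assumes [measurable]: "p \<in> borel_measurable M" "q \<in> borel_measurable M"
  shows "absolutely_continuous (density M q) (density M p) \<longleftrightarrow> (AE x in M. q x = 0 \<longrightarrow> p x = 0)"
proof
  assume "absolutely_continuous (density M q) (density M p)"
  moreover have "{x \<in> space M. q x = 0} \<in> null_sets (density M q)"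
    by (subst null_sets_density_iff) auto
  ultimately have "{x \<in> space M. q x = 0} \<in> null_sets (density M p)"
    unfolding absolutely_continuous_def by auto
  then show "AE x in M. q x = 0 \<longrightarrow> p x = 0"
    by (subst (asm) null_sets_density_iff) (auto elim: AE_mp)
next
  assume ae: "AE x in M. q x = 0 \<longrightarrow> p x = 0"
  show "absolutely_continuous (density M q) (density M p)"
    unfolding absolutely_continuous_def
  proof
    fix A assume "A \<in> null_sets (density M q)"
    then have "A \<in> sets M" "AE x in M. x \<in> A \<longrightarrow> q x = 0"
      by (auto simp: null_sets_density_iff)
    with ae show "A \<in> null_sets (density M p)"
      by (auto simp: null_sets_density_iff elim: AE_mp)
  qed
qed

lemma mult_ratio_powr_eq_renyi_integrand:
  assumes "p \<noteq> \<infinity>" "q \<noteq> \<infinity>" "q = 0 \<longrightarrow> p = 0"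
  shows "q * ennreal (enn2real (if q = 0 then 0 else p / q) powr \<alpha>) = renyi_integrand \<alpha> p q"
proof (cases "q = 0 \<or> p = 0")
  case False
  then obtain p' q' where pq: "p = ennreal p'" "p' > 0" "q = ennreal q'" "q' > 0"
    using assms by (metis ennreal_pos_cases)
  then have "p / q = ennreal (p' / q')"
    by (simp add: divide_ennreal)
  with pq show ?thesis
    by (simp add: renyi_integrand_ennreal ennreal_mult'[symmetric] powr_divide powr_diff field_simps)
qed (use assms in \<open>auto simp: renyi_integrand_def\<close>)

lemma nn_integral_RN_deriv_density_powr:
  assumes [measurable]: "p \<in> borel_measurable M" "q \<in> borel_measurable M"
    and P: "prob_space (density M p)" and Q: "prob_space (density M q)"
    and ac: "AE x in M. q x = 0 \<longrightarrow> p x = 0"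
  shows "(\<integral>\<^sup>+ x. ennreal (enn2real (RN_deriv (density M q) (density M p) x) powr \<alpha>) \<partial>density M q)
       = (\<integral>\<^sup>+ x. renyi_integrand \<alpha> (p x) (q x) \<partial>M)"
proof -
  define f where "f x = (if q x = 0 then 0 else p x / q x)" for x
  have [measurable]: "f \<in> borel_measurable M" unfolding f_def by measurable
  have p_fin: "AE x in M. p x \<noteq> \<infinity>" and q_fin: "AE x in M. q x \<noteq> \<infinity>"
    using AE_finite_if_prob_space_density[OF _ P] AE_finite_if_prob_space_density[OF _ Q]
    by simp_all
  have "density (density M q) f = density M (\<lambda>x. q x * f x)"
    by (simp add: density_density_eq)
  also have "\<dots> = density M p"
  proof (rule density_cong)
    show "AE x in M. q x * f x = p x"
      using ac q_fin by eventually_elim (auto simp: f_def ennreal_times_divide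
          mult.commute[of "q _" "p _"] ennreal_mult_divide_eq)
  qed auto
  finally have "AE x in density M q. f x = RN_deriv (density M q) (density M p) x"
    by (intro RN_deriv_unique_sigma_finite[of f]) (auto intro: prob_space_imp_sigma_finite P)
  then have "(\<integral>\<^sup>+ x. ennreal (enn2real (RN_deriv (density M q) (density M p) x) powr \<alpha>) \<partial>density M q)
      = (\<integral>\<^sup>+ x. ennreal (enn2real (f x) powr \<alpha>) \<partial>density M q)"
    by (intro nn_integral_cong_AE) (auto elim: eventually_mono)
  also have "\<dots> = (\<integral>\<^sup>+ x. q x * ennreal (enn2real (f x) powr \<alpha>) \<partial>M)"
    by (simp add: nn_integral_density)
  also have "\<dots> = (\<integral>\<^sup>+ x. renyi_integrand \<alpha> (p x) (q x) \<partial>M)"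
    using ac p_fin q_fin
    by (intro nn_integral_cong_AE, eventually_elim) (simp add: f_def mult_ratio_powr_eq_renyi_integrand)
  finally show ?thesis .
qed

lemma renyi_div_density:
  assumes [measurable]: "p \<in> borel_measurable M" "q \<in> borel_measurable M"
    and P: "prob_space (density M p)" and Q: "prob_space (density M q)"
  shows "renyi_div \<alpha> (density M p) (density M q) =
    (let I = \<integral>\<^sup>+ x. renyi_integrand \<alpha> (p x) (q x) \<partial>M
     in if I = \<infinity> then \<infinity> else ereal (ln (enn2real I) / (\<alpha> - 1)))"
proof (cases "AE x in M. q x = 0 \<longrightarrow> p x = 0")
  case True
  then show ?thesis
    by (simp add: renyi_div_def absolutely_continuous_density_iff
        nn_integral_RN_deriv_density_powr[OF assms(1,2) P Q True])
next
  case False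
  then show ?thesis
    by (simp add: renyi_div_def absolutely_continuous_density_iff nn_integral_renyi_integrand_eq_top)
qed

lemma nn_integral_renyi_integrand_neq_0:
  assumes [measurable]: "p \<in> borel_measurable M" "q \<in> borel_measurable M"
    and P: "prob_space (density M p)" and Q: "prob_space (density M q)"
  shows "(\<integral>\<^sup>+ x. renyi_integrand \<alpha> (p x) (q x) \<partial>M) \<noteq> 0"
proof
  assume "(\<integral>\<^sup>+ x. renyi_integrand \<alpha> (p x) (q x) \<partial>M) = 0"
  then have "AE x in M. renyi_integrand \<alpha> (p x) (q x) = 0"
    by (simp add: nn_integral_0_iff_AE)
  moreover have "AE x in M. p x \<noteq> \<infinity>" "AE x in M. q x \<noteq> \<infinity>"
    using AE_finite_if_prob_space_density[OF _ P] AE_finite_if_prob_space_density[OF _ Q]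
    by simp_all
  ultimately have "AE x in M. p x = 0"
    by eventually_elim (simp add: renyi_integrand_eq_0_iff)
  then have "integral\<^sup>N M p = 0"
    by (simp add: nn_integral_0_iff_AE)
  with nn_integral_eq_1_if_prob_space_density[OF _ P] show False
    by simp
qed

lemma renyi_div_density_le_iff:
  assumes \<alpha>: "\<alpha> > 1" and [measurable]: "p \<in> borel_measurable M" "q \<in> borel_measurable M"
    and P: "prob_space (density M p)" and Q: "prob_space (density M q)"
  shows "renyi_div \<alpha> (density M p) (density M q) \<le> ereal \<epsilon> \<longleftrightarrow>
    (\<integral>\<^sup>+ x. renyi_integrand \<alpha> (p x) (q x) \<partial>M) \<le> ennreal (exp ((\<alpha> - 1) * \<epsilon>))"
proof (cases "(\<integral>\<^sup>+ x. renyi_integrand \<alpha> (p x) (q x) \<partial>M) = \<infinity>")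
  case True
  then show ?thesis
    by (simp add: renyi_div_density[OF assms(2,3) P Q] top_unique)
next
  case False
  then obtain r where r: "(\<integral>\<^sup>+ x. renyi_integrand \<alpha> (p x) (q x) \<partial>M) = ennreal r" "r > 0"
    using nn_integral_renyi_integrand_neq_0[OF assms(2,3) P Q] by (metis ennreal_pos_cases)
  have "ln r / (\<alpha> - 1) \<le> \<epsilon> \<longleftrightarrow> ln r \<le> ln (exp ((\<alpha> - 1) * \<epsilon>))"
    using \<alpha> by (simp add: pos_divide_le_eq mult.commute)
  also have "\<dots> \<longleftrightarrow> r \<le> exp ((\<alpha> - 1) * \<epsilon>)"
    using r by (subst ln_le_cancel_iff) auto
  moreover have "renyi_div \<alpha> (density M p) (density M q) = ereal (ln r / (\<alpha> - 1))"
    using r by (simp add: renyi_div_density[OF assms(2,3) P Q])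
  ultimately show ?thesis
    using r by (simp add: ennreal_le_iff)
qed

lemma borel_measurable_case_prod_compose:
  assumes "case_prod \<beta> \<in> borel_measurable (M1 \<Otimes>\<^sub>M M2)" "f \<in> N \<rightarrow>\<^sub>M M1" "g \<in> N \<rightarrow>\<^sub>M M2"
  shows "(\<lambda>x. \<beta> (f x) (g x)) \<in> borel_measurable N"
  using measurable_compose[OF measurable_Pair[OF assms(2,3)] assms(1)] by simp

lemma nn_integral_fst_snd_mult:
  assumes "sigma_finite_measure N"
    and [measurable]: "f \<in> borel_measurable M" "g \<in> borel_measurable N"
  shows "(\<integral>\<^sup>+ x. f (fst x) * g (snd x) \<partial>(M \<Otimes>\<^sub>M N)) = integral\<^sup>N M f * integral\<^sup>N N g"
proof -
  have "(\<integral>\<^sup>+ x. f (fst x) * g (snd x) \<partial>(M \<Otimes>\<^sub>M N)) = (\<integral>\<^sup>+ s. \<integral>\<^sup>+ t. f s * g t \<partial>N \<partial>M)"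
    by (subst sigma_finite_measure.nn_integral_fst[OF assms(1), symmetric]) auto
  also have "\<dots> = integral\<^sup>N M f * integral\<^sup>N N g"
    by (simp add: nn_integral_cmult nn_integral_multc)
  finally show ?thesis .
qed

lemma nn_integral_mixture:
  assumes Z: "sigma_finite_measure Z" and W: "sigma_finite_measure W"
    and [measurable]: "u \<in> borel_measurable Z" "case_prod \<beta> \<in> borel_measurable (Z \<Otimes>\<^sub>M W)"
    and \<beta>_prob: "\<And>s. s \<in> space Z \<Longrightarrow> (\<integral>\<^sup>+ w. \<beta> s w \<partial>W) = 1"
  shows "(\<integral>\<^sup>+ w. \<integral>\<^sup>+ s. u s * \<beta> s w \<partial>Z \<partial>W) = integral\<^sup>N Z u"
proof -
  interpret pair_sigma_finite Z W
    using Z W by (simp add: pair_sigma_finite_def)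
  have "(\<integral>\<^sup>+ w. \<integral>\<^sup>+ s. u s * \<beta> s w \<partial>Z \<partial>W) = (\<integral>\<^sup>+ s. \<integral>\<^sup>+ w. u s * \<beta> s w \<partial>W \<partial>Z)"
    by (rule Fubini') measurable
  also have "\<dots> = (\<integral>\<^sup>+ s. u s * (\<integral>\<^sup>+ w. \<beta> s w \<partial>W) \<partial>Z)"
    by (intro nn_integral_cong) (simp add: nn_integral_cmult)
  also have "\<dots> = integral\<^sup>N Z u"
    by (intro nn_integral_cong) (simp add: \<beta>_prob)
  finally show ?thesis .
qed

text \<open>Jensen's inequality with respect to the product of the two mixing densities u and v; by
  homogeneity of renyi_integrand, the normalising factors \<integral>u and \<integral>v come out as the constant on
  the left.\<close>
lemma renyi_integrand_mixture_le:
  assumes \<alpha>: "\<alpha> > 1" and Z: "sigma_finite_measure Z"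
    and [measurable]: "u \<in> borel_measurable Z" "v \<in> borel_measurable Z"
      "f \<in> borel_measurable Z" "g \<in> borel_measurable Z"
    and U: "integral\<^sup>N Z u = ennreal U" "U > 0" and V: "integral\<^sup>N Z v = ennreal V" "V > 0"
    and fin: "(\<integral>\<^sup>+ s. u s * f s \<partial>Z) \<noteq> \<infinity>" "(\<integral>\<^sup>+ t. v t * g t \<partial>Z) \<noteq> \<infinity>"
  shows "ennreal (V powr \<alpha> * U powr (1 - \<alpha>))
      * renyi_integrand \<alpha> (\<integral>\<^sup>+ s. u s * f s \<partial>Z) (\<integral>\<^sup>+ t. v t * g t \<partial>Z)
    \<le> (\<integral>\<^sup>+ x. u (fst x) * v (snd x) * renyi_integrand \<alpha> (f (fst x)) (g (snd x)) \<partial>(Z \<Otimes>\<^sub>M Z))"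
proof -
  define \<nu> where "\<nu> = density (Z \<Otimes>\<^sub>M Z) (\<lambda>x. u (fst x) * v (snd x))"
  have f_mix: "(\<integral>\<^sup>+ x. f (fst x) \<partial>\<nu>) = ennreal V * (\<integral>\<^sup>+ s. u s * f s \<partial>Z)"
  proof -
    have "(\<integral>\<^sup>+ x. f (fst x) \<partial>\<nu>) = (\<integral>\<^sup>+ x. (u (fst x) * f (fst x)) * v (snd x) \<partial>(Z \<Otimes>\<^sub>M Z))"
      unfolding \<nu>_def by (subst nn_integral_density) (auto simp: mult_ac)
    also have "\<dots> = (\<integral>\<^sup>+ s. u s * f s \<partial>Z) * integral\<^sup>N Z v"
      by (rule nn_integral_fst_snd_mult[OF Z]) measurable
    finally show ?thesis
      using V by (simp add: mult.commute)
  qed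
  have g_mix: "(\<integral>\<^sup>+ x. g (snd x) \<partial>\<nu>) = ennreal U * (\<integral>\<^sup>+ t. v t * g t \<partial>Z)"
  proof -
    have "(\<integral>\<^sup>+ x. g (snd x) \<partial>\<nu>) = (\<integral>\<^sup>+ x. u (fst x) * (v (snd x) * g (snd x)) \<partial>(Z \<Otimes>\<^sub>M Z))"
      unfolding \<nu>_def by (subst nn_integral_density) (auto simp: mult_ac)
    also have "\<dots> = integral\<^sup>N Z u * (\<integral>\<^sup>+ t. v t * g t \<partial>Z)"
      by (rule nn_integral_fst_snd_mult[OF Z]) measurable
    finally show ?thesis
      using U by simp
  qed
  have "renyi_integrand \<alpha> (\<integral>\<^sup>+ x. f (fst x) \<partial>\<nu>) (\<integral>\<^sup>+ x. g (snd x) \<partial>\<nu>)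
      \<le> (\<integral>\<^sup>+ x. renyi_integrand \<alpha> (f (fst x)) (g (snd x)) \<partial>\<nu>)"
  proof (rule renyi_integrand_nn_integral_le[OF \<alpha>])
    show "(\<lambda>x. f (fst x)) \<in> borel_measurable \<nu>" "(\<lambda>x. g (snd x)) \<in> borel_measurable \<nu>"
      unfolding \<nu>_def by measurable
  qed (use fin U V in \<open>simp_all add: f_mix g_mix ennreal_mult_eq_top_iff\<close>)
  also have "\<dots> = (\<integral>\<^sup>+ x. u (fst x) * v (snd x) * renyi_integrand \<alpha> (f (fst x)) (g (snd x)) \<partial>(Z \<Otimes>\<^sub>M Z))"
    unfolding \<nu>_def by (rule nn_integral_density) measurable
  finally show ?thesis
    using U V by (simp add: f_mix g_mix renyi_integrand_scale)
qed

lemma powr_mult_powr_one_minus: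
  fixes U V \<alpha> :: real
  assumes "U > 0" "V > 0"
  shows "V powr \<alpha> * U powr (1 - \<alpha>) * U powr \<alpha> * V powr (1 - \<alpha>) = U * V"
proof -
  have "V powr \<alpha> * U powr (1 - \<alpha>) * U powr \<alpha> * V powr (1 - \<alpha>)
      = (U powr \<alpha> * U powr (1 - \<alpha>)) * (V powr \<alpha> * V powr (1 - \<alpha>))"
    by (simp add: mult_ac)
  also have "\<dots> = U * V"
    using assms by (simp add: powr_add[symmetric])
  finally show ?thesis .
qed

lemma nn_integral_pair_renyi_integrand_le:
  fixes \<beta> :: "'b \<Rightarrow> 'c \<Rightarrow> ennreal"
  assumes Z: "sigma_finite_measure Z" and W: "sigma_finite_measure W"
    and u[measurable]: "u \<in> borel_measurable Z" and v[measurable]: "v \<in> borel_measurable Z"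
    and \<beta>: "case_prod \<beta> \<in> borel_measurable (Z \<Otimes>\<^sub>M W)"
    and \<beta>_bound: "\<And>s t. s \<in> space Z \<Longrightarrow> t \<in> space Z \<Longrightarrow>
      (\<integral>\<^sup>+ w. renyi_integrand \<alpha> (\<beta> s w) (\<beta> t w) \<partial>W) \<le> C"
  shows "(\<integral>\<^sup>+ w. \<integral>\<^sup>+ x. u (fst x) * v (snd x) * renyi_integrand \<alpha> (\<beta> (fst x) w) (\<beta> (snd x) w)
      \<partial>(Z \<Otimes>\<^sub>M Z) \<partial>W) \<le> integral\<^sup>N Z u * integral\<^sup>N Z v * C"
proof -
  note [measurable] = borel_measurable_case_prod_compose[OF \<beta>]
  interpret ZZW: pair_sigma_finite "Z \<Otimes>\<^sub>M Z" W
    using Z W by (simp add: pair_sigma_finite_def sigma_finite_pair_measure)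
  have "(\<integral>\<^sup>+ w. \<integral>\<^sup>+ x. u (fst x) * v (snd x) * renyi_integrand \<alpha> (\<beta> (fst x) w) (\<beta> (snd x) w)
      \<partial>(Z \<Otimes>\<^sub>M Z) \<partial>W)
    = (\<integral>\<^sup>+ x. \<integral>\<^sup>+ w. u (fst x) * v (snd x) * renyi_integrand \<alpha> (\<beta> (fst x) w) (\<beta> (snd x) w)
      \<partial>W \<partial>(Z \<Otimes>\<^sub>M Z))"
    by (rule ZZW.Fubini') measurable
  also have "\<dots> \<le> (\<integral>\<^sup>+ x. u (fst x) * v (snd x) * C \<partial>(Z \<Otimes>\<^sub>M Z))"
  proof (intro nn_integral_mono)
    fix x assume "x \<in> space (Z \<Otimes>\<^sub>M Z)"
    then show "(\<integral>\<^sup>+ w. u (fst x) * v (snd x) * renyi_integrand \<alpha> (\<beta> (fst x) w) (\<beta> (snd x) w) \<partial>W)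
        \<le> u (fst x) * v (snd x) * C"
      by (subst nn_integral_cmult) (auto intro!: mult_left_mono \<beta>_bound simp: space_pair_measure)
  qed
  also have "\<dots> = integral\<^sup>N Z u * integral\<^sup>N Z v * C"
    by (subst nn_integral_multc) (simp_all add: nn_integral_fst_snd_mult[OF Z u v])
  finally show ?thesis .
qed

lemma nn_integral_renyi_integrand_mixture_le_pos:
  fixes \<beta> :: "'b \<Rightarrow> 'c \<Rightarrow> ennreal"
  assumes \<alpha>: "\<alpha> > 1" and Z: "sigma_finite_measure Z" and W: "sigma_finite_measure W"
    and u[measurable]: "u \<in> borel_measurable Z" and v[measurable]: "v \<in> borel_measurable Z"
    and \<beta>: "case_prod \<beta> \<in> borel_measurable (Z \<Otimes>\<^sub>M W)"
    and \<beta>_prob: "\<And>s. s \<in> space Z \<Longrightarrow> (\<integral>\<^sup>+ w. \<beta> s w \<partial>W) = 1"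
    and \<beta>_bound: "\<And>s t. s \<in> space Z \<Longrightarrow> t \<in> space Z \<Longrightarrow>
      (\<integral>\<^sup>+ w. renyi_integrand \<alpha> (\<beta> s w) (\<beta> t w) \<partial>W) \<le> C"
    and U: "integral\<^sup>N Z u = ennreal U" "U > 0" and V: "integral\<^sup>N Z v = ennreal V" "V > 0"
  shows "(\<integral>\<^sup>+ w. renyi_integrand \<alpha> (\<integral>\<^sup>+ s. u s * \<beta> s w \<partial>Z) (\<integral>\<^sup>+ t. v t * \<beta> t w \<partial>Z) \<partial>W)
       \<le> C * renyi_integrand \<alpha> (integral\<^sup>N Z u) (integral\<^sup>N Z v)"
proof -
  note [measurable] = borel_measurable_case_prod_compose[OF \<beta>]
  have \<beta>_section: "(\<lambda>s. \<beta> s w) \<in> borel_measurable Z" if "w \<in> space W" for w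
    using that by measurable
  have [measurable]: "(\<lambda>w. \<integral>\<^sup>+ s. f s * \<beta> s w \<partial>Z) \<in> borel_measurable W"
    if [measurable]: "f \<in> borel_measurable Z" for f
    by (rule sigma_finite_measure.borel_measurable_nn_integral[OF Z]) measurable
  have mixture_fin: "AE w in W. (\<integral>\<^sup>+ s. f s * \<beta> s w \<partial>Z) \<noteq> \<infinity>"
    if [measurable]: "f \<in> borel_measurable Z" and "integral\<^sup>N Z f \<noteq> \<infinity>" for f
    using that by (intro nn_integral_PInf_AE) (simp_all add: nn_integral_mixture[OF Z W _ \<beta> \<beta>_prob])
  have fin: "AE w in W. (\<integral>\<^sup>+ s. u s * \<beta> s w \<partial>Z) \<noteq> \<infinity>" "AE w in W. (\<integral>\<^sup>+ t. v t * \<beta> t w \<partial>Z) \<noteq> \<infinity>"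
    using mixture_fin[OF u] mixture_fin[OF v] U V by simp_all
  define c where "c = V powr \<alpha> * U powr (1 - \<alpha>)"
  have "ennreal c * (\<integral>\<^sup>+ w. renyi_integrand \<alpha> (\<integral>\<^sup>+ s. u s * \<beta> s w \<partial>Z) (\<integral>\<^sup>+ t. v t * \<beta> t w \<partial>Z) \<partial>W)
      = (\<integral>\<^sup>+ w. ennreal c * renyi_integrand \<alpha> (\<integral>\<^sup>+ s. u s * \<beta> s w \<partial>Z) (\<integral>\<^sup>+ t. v t * \<beta> t w \<partial>Z) \<partial>W)"
    by (rule nn_integral_cmult[symmetric]) measurable
  also have "\<dots> \<le> (\<integral>\<^sup>+ w. \<integral>\<^sup>+ x. u (fst x) * v (snd x) * renyi_integrand \<alpha> (\<beta> (fst x) w) (\<beta> (snd x) w)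
      \<partial>(Z \<Otimes>\<^sub>M Z) \<partial>W)"
    using fin AE_space unfolding c_def
    by (intro nn_integral_mono_AE, eventually_elim)
      (simp add: renyi_integrand_mixture_le[OF \<alpha> Z u v \<beta>_section \<beta>_section U V])
  also have "\<dots> \<le> integral\<^sup>N Z u * integral\<^sup>N Z v * C"
    by (rule nn_integral_pair_renyi_integrand_le[OF Z W u v \<beta> \<beta>_bound])
  also have "\<dots> = ennreal c * (C * renyi_integrand \<alpha> (integral\<^sup>N Z u) (integral\<^sup>N Z v))"
  proof -
    have "ennreal c * renyi_integrand \<alpha> (integral\<^sup>N Z u) (integral\<^sup>N Z v) = ennreal (U * V)"
      using U V by (simp add: renyi_integrand_ennreal c_def ennreal_mult'[symmetric]
          powr_mult_powr_one_minus mult.assoc[symmetric])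
    moreover have "integral\<^sup>N Z u * integral\<^sup>N Z v = ennreal (U * V)"
      using U V by (simp add: ennreal_mult)
    ultimately show ?thesis
      by (simp add: mult_ac)
  qed
  finally show ?thesis
    using U V by (simp add: c_def ennreal_mult_le_mult_iff)
qed

lemma nn_integral_renyi_integrand_mixture_le:
  fixes \<beta> :: "'b \<Rightarrow> 'c \<Rightarrow> ennreal"
  assumes \<alpha>: "\<alpha> > 1" and Z: "sigma_finite_measure Z" and W: "sigma_finite_measure W"
    and u[measurable]: "u \<in> borel_measurable Z" and v[measurable]: "v \<in> borel_measurable Z"
    and \<beta>: "case_prod \<beta> \<in> borel_measurable (Z \<Otimes>\<^sub>M W)"
    and \<beta>_prob: "\<And>s. s \<in> space Z \<Longrightarrow> (\<integral>\<^sup>+ w. \<beta> s w \<partial>W) = 1"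
    and \<beta>_bound: "\<And>s t. s \<in> space Z \<Longrightarrow> t \<in> space Z \<Longrightarrow>
      (\<integral>\<^sup>+ w. renyi_integrand \<alpha> (\<beta> s w) (\<beta> t w) \<partial>W) \<le> C"
    and C: "C \<noteq> 0" and u_fin: "integral\<^sup>N Z u \<noteq> \<infinity>" and v_fin: "integral\<^sup>N Z v \<noteq> \<infinity>"
  shows "(\<integral>\<^sup>+ w. renyi_integrand \<alpha> (\<integral>\<^sup>+ s. u s * \<beta> s w \<partial>Z) (\<integral>\<^sup>+ t. v t * \<beta> t w \<partial>Z) \<partial>W)
       \<le> C * renyi_integrand \<alpha> (integral\<^sup>N Z u) (integral\<^sup>N Z v)"
proof -
  consider "integral\<^sup>N Z u = 0" | "integral\<^sup>N Z u \<noteq> 0" "integral\<^sup>N Z v = 0"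
    | "integral\<^sup>N Z u \<noteq> 0" "integral\<^sup>N Z v \<noteq> 0" by blast
  then show ?thesis
  proof cases
    case 1
    then have "AE s in Z. u s = 0"
      by (simp add: nn_integral_0_iff_AE)
    moreover have "(\<lambda>s. u s * \<beta> s w) \<in> borel_measurable Z" if "w \<in> space W" for w
      using borel_measurable_case_prod_compose[OF \<beta>] that by measurable
    ultimately have "(\<integral>\<^sup>+ s. u s * \<beta> s w \<partial>Z) = 0" if "w \<in> space W" for w
      using that by (subst nn_integral_0_iff_AE) (auto elim: eventually_mono)
    then have "(\<integral>\<^sup>+ w. renyi_integrand \<alpha> (\<integral>\<^sup>+ s. u s * \<beta> s w \<partial>Z) (\<integral>\<^sup>+ t. v t * \<beta> t w \<partial>Z) \<partial>W)
        = (\<integral>\<^sup>+ w. 0 \<partial>W)"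
      by (intro nn_integral_cong) (simp add: renyi_integrand_def)
    then show ?thesis
      by simp
  next
    case 2
    then show ?thesis
      using C by (simp add: renyi_integrand_def ennreal_mult_top)
  next
    case 3
    then obtain U V where U: "integral\<^sup>N Z u = ennreal U" "U > 0"
      and V: "integral\<^sup>N Z v = ennreal V" "V > 0"
      using u_fin v_fin by (metis ennreal_pos_cases)
    show ?thesis
      by (rule nn_integral_renyi_integrand_mixture_le_pos[OF \<alpha> Z W u v \<beta> \<beta>_prob \<beta>_bound U V])
  qed
qed

definition marginal_density :: "'b measure \<Rightarrow> ('a \<times> 'b \<Rightarrow> ennreal) \<Rightarrow> 'a \<Rightarrow> ennreal" where
  "marginal_density N a x = (\<integral>\<^sup>+ y. a (x, y) \<partial>N)"

text \<open>Density of the pair (z1, w), where z = (z1, z2) has density a and w is then drawn with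
  density b z.\<close>
definition release_density ::
    "'z2 measure \<Rightarrow> ('z1 \<times> 'z2 \<Rightarrow> ennreal) \<Rightarrow> ('z1 \<times> 'z2 \<Rightarrow> 'w \<Rightarrow> ennreal) \<Rightarrow> 'z1 \<times> 'w \<Rightarrow> ennreal" where
  "release_density Z2 a b x = (\<integral>\<^sup>+ z2. a (fst x, z2) * b (fst x, z2) (snd x) \<partial>Z2)"

lemma borel_measurable_marginal_density:
  assumes "sigma_finite_measure N" and [measurable]: "a \<in> borel_measurable (M \<Otimes>\<^sub>M N)"
  shows "marginal_density N a \<in> borel_measurable M"
  unfolding marginal_density_def[abs_def]
  by (rule sigma_finite_measure.borel_measurable_nn_integral[OF assms(1)]) measurable

lemma distr_fst_density:
  assumes N: "sigma_finite_measure N" and [measurable]: "a \<in> borel_measurable (M \<Otimes>\<^sub>M N)"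
  shows "distr (density (M \<Otimes>\<^sub>M N) a) M fst = density M (marginal_density N a)"
proof (rule measure_eqI)
  fix S assume "S \<in> sets (distr (density (M \<Otimes>\<^sub>M N) a) M fst)"
  then have S[measurable]: "S \<in> sets M" by simp
  have "emeasure (distr (density (M \<Otimes>\<^sub>M N) a) M fst) S
      = (\<integral>\<^sup>+ z. a z * indicator (fst -` S \<inter> space (M \<Otimes>\<^sub>M N)) z \<partial>(M \<Otimes>\<^sub>M N))"
    by (simp add: emeasure_distr emeasure_density)
  also have "\<dots> = (\<integral>\<^sup>+ z. a z * indicator S (fst z) \<partial>(M \<Otimes>\<^sub>M N))"
    by (intro nn_integral_cong) (auto simp: indicator_def)
  also have "\<dots> = (\<integral>\<^sup>+ x. \<integral>\<^sup>+ y. a (x, y) * indicator S x \<partial>N \<partial>M)"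
    by (subst sigma_finite_measure.nn_integral_fst[OF N, symmetric]) auto
  also have "\<dots> = (\<integral>\<^sup>+ x. marginal_density N a x * indicator S x \<partial>M)"
    by (intro nn_integral_cong) (simp add: nn_integral_multc marginal_density_def)
  also have "\<dots> = emeasure (density M (marginal_density N a)) S"
    using borel_measurable_marginal_density[OF N assms(2)] by (subst emeasure_density) auto
  finally show "emeasure (distr (density (M \<Otimes>\<^sub>M N) a) M fst) S
      = emeasure (density M (marginal_density N a)) S" .
qed simp

lemma emeasure_bind_density_return_Pair:
  assumes "prob_space (density W \<beta>)" and [measurable]: "\<beta> \<in> borel_measurable W"
    and x[measurable]: "x \<in> space X" and S[measurable]: "S \<in> sets (X \<Otimes>\<^sub>M W)"
  shows "emeasure (density W \<beta> \<bind> (\<lambda>w. return (X \<Otimes>\<^sub>M W) (x, w))) S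
       = (\<integral>\<^sup>+ w. \<beta> w * indicator S (x, w) \<partial>W)"
proof -
  have "emeasure (density W \<beta> \<bind> (\<lambda>w. return (X \<Otimes>\<^sub>M W) (x, w))) S
      = (\<integral>\<^sup>+ w. emeasure (return (X \<Otimes>\<^sub>M W) (x, w)) S \<partial>density W \<beta>)"
    by (rule emeasure_bind_prob_algebra[of _ W, OF _ _ S])
      (use assms(1) in \<open>simp add: space_prob_algebra\<close>, measurable)
  also have "\<dots> = (\<integral>\<^sup>+ w. \<beta> w * indicator S (x, w) \<partial>W)"
    by (simp add: nn_integral_density)
  finally show ?thesis .
qed

lemma borel_measurable_release_density:
  assumes "sigma_finite_measure Z2" and [measurable]: "a \<in> borel_measurable (Z1 \<Otimes>\<^sub>M Z2)"
    and b: "case_prod b \<in> borel_measurable ((Z1 \<Otimes>\<^sub>M Z2) \<Otimes>\<^sub>M W)"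
  shows "release_density Z2 a b \<in> borel_measurable (Z1 \<Otimes>\<^sub>M W)"
proof -
  note [measurable] = borel_measurable_case_prod_compose[OF b]
  show ?thesis
    unfolding release_density_def[abs_def]
    by (rule sigma_finite_measure.borel_measurable_nn_integral[OF assms(1)]) measurable
qed

lemma nn_integral_release_density:
  assumes Z2: "sigma_finite_measure Z2" and W: "sigma_finite_measure W"
    and [measurable]: "a \<in> borel_measurable (Z1 \<Otimes>\<^sub>M Z2)"
    and b: "case_prod b \<in> borel_measurable ((Z1 \<Otimes>\<^sub>M Z2) \<Otimes>\<^sub>M W)"
    and [measurable]: "f \<in> borel_measurable (Z1 \<Otimes>\<^sub>M W)"
  shows "(\<integral>\<^sup>+ z. a z * (\<integral>\<^sup>+ w. b z w * f (fst z, w) \<partial>W) \<partial>(Z1 \<Otimes>\<^sub>M Z2))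
       = (\<integral>\<^sup>+ x. release_density Z2 a b x * f x \<partial>(Z1 \<Otimes>\<^sub>M W))"
proof -
  note [measurable] = borel_measurable_case_prod_compose[OF b]
  have [measurable]: "release_density Z2 a b \<in> borel_measurable (Z1 \<Otimes>\<^sub>M W)"
    by (rule borel_measurable_release_density[OF Z2 _ b]) measurable
  have [measurable]: "(\<lambda>z. \<integral>\<^sup>+ w. b z w * f (fst z, w) \<partial>W) \<in> borel_measurable (Z1 \<Otimes>\<^sub>M Z2)"
    by (rule sigma_finite_measure.borel_measurable_nn_integral[OF W]) measurable
  interpret Z2: sigma_finite_measure Z2 by (fact Z2)
  interpret W: sigma_finite_measure W by (fact W)
  interpret Z2W: pair_sigma_finite Z2 W by (simp add: pair_sigma_finite_def Z2 W)
  have "(\<integral>\<^sup>+ z. a z * (\<integral>\<^sup>+ w. b z w * f (fst z, w) \<partial>W) \<partial>(Z1 \<Otimes>\<^sub>M Z2))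
      = (\<integral>\<^sup>+ z1. \<integral>\<^sup>+ z2. a (z1, z2) * (\<integral>\<^sup>+ w. b (z1, z2) w * f (z1, w) \<partial>W) \<partial>Z2 \<partial>Z1)"
    by (subst Z2.nn_integral_fst[symmetric]) auto
  also have "\<dots> = (\<integral>\<^sup>+ z1. \<integral>\<^sup>+ z2. \<integral>\<^sup>+ w. a (z1, z2) * b (z1, z2) w * f (z1, w) \<partial>W \<partial>Z2 \<partial>Z1)"
  proof (intro nn_integral_cong)
    fix z1 z2 assume [measurable]: "z1 \<in> space Z1" "z2 \<in> space Z2"
    show "a (z1, z2) * (\<integral>\<^sup>+ w. b (z1, z2) w * f (z1, w) \<partial>W)
        = (\<integral>\<^sup>+ w. a (z1, z2) * b (z1, z2) w * f (z1, w) \<partial>W)"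
      by (subst nn_integral_cmult[symmetric]) (measurable, simp add: mult.assoc)
  qed
  also have "\<dots> = (\<integral>\<^sup>+ z1. \<integral>\<^sup>+ w. \<integral>\<^sup>+ z2. a (z1, z2) * b (z1, z2) w * f (z1, w) \<partial>Z2 \<partial>W \<partial>Z1)"
  proof (rule nn_integral_cong)
    fix z1 assume [measurable]: "z1 \<in> space Z1"
    show "(\<integral>\<^sup>+ z2. \<integral>\<^sup>+ w. a (z1, z2) * b (z1, z2) w * f (z1, w) \<partial>W \<partial>Z2)
        = (\<integral>\<^sup>+ w. \<integral>\<^sup>+ z2. a (z1, z2) * b (z1, z2) w * f (z1, w) \<partial>Z2 \<partial>W)"
      by (rule Z2W.Fubini'[symmetric]) measurable
  qed
  also have "\<dots> = (\<integral>\<^sup>+ z1. \<integral>\<^sup>+ w. release_density Z2 a b (z1, w) * f (z1, w) \<partial>W \<partial>Z1)"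
    by (intro nn_integral_cong) (simp add: release_density_def nn_integral_multc)
  also have "\<dots> = (\<integral>\<^sup>+ x. release_density Z2 a b x * f x \<partial>(Z1 \<Otimes>\<^sub>M W))"
    by (rule W.nn_integral_fst) measurable
  finally show ?thesis .
qed

lemma prob_space_density_kernel:
  assumes "B \<in> M \<rightarrow>\<^sub>M prob_algebra W" "\<And>z. z \<in> space M \<Longrightarrow> B z = density W (b z)"
    and "z \<in> space M"
  shows "prob_space (density W (b z))"
  using measurable_space[OF assms(1,3)] by (simp add: assms(2)[OF assms(3)] space_prob_algebra)

lemma bind_density_release_density:
  assumes Z2: "sigma_finite_measure Z2" and W: "sigma_finite_measure W"
    and a[measurable]: "a \<in> borel_measurable (Z1 \<Otimes>\<^sub>M Z2)"
    and A: "prob_space (density (Z1 \<Otimes>\<^sub>M Z2) a)"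
    and B[measurable]: "B \<in> Z1 \<Otimes>\<^sub>M Z2 \<rightarrow>\<^sub>M prob_algebra W"
    and B_density: "\<And>z. z \<in> space (Z1 \<Otimes>\<^sub>M Z2) \<Longrightarrow> B z = density W (b z)"
    and b: "case_prod b \<in> borel_measurable ((Z1 \<Otimes>\<^sub>M Z2) \<Otimes>\<^sub>M W)"
  shows "density (Z1 \<Otimes>\<^sub>M Z2) a \<bind> (\<lambda>z. B z \<bind> (\<lambda>w. return (Z1 \<Otimes>\<^sub>M W) (fst z, w)))
      = density (Z1 \<Otimes>\<^sub>M W) (release_density Z2 a b)"
      (is "bind ?A ?K = _")
    and "prob_space (density (Z1 \<Otimes>\<^sub>M W) (release_density Z2 a b))"
proof -
  note [measurable] = borel_measurable_case_prod_compose[OF b]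
  have [measurable]: "release_density Z2 a b \<in> borel_measurable (Z1 \<Otimes>\<^sub>M W)"
    by (rule borel_measurable_release_density[OF Z2 a b])
  have A_space: "?A \<in> space (prob_algebra (Z1 \<Otimes>\<^sub>M Z2))"
    by (simp add: space_prob_algebra A)
  have K: "?K \<in> Z1 \<Otimes>\<^sub>M Z2 \<rightarrow>\<^sub>M prob_algebra (Z1 \<Otimes>\<^sub>M W)"
    by measurable
  show eq: "?A \<bind> ?K = density (Z1 \<Otimes>\<^sub>M W) (release_density Z2 a b)"
  proof (rule measure_eqI)
    fix S assume "S \<in> sets (?A \<bind> ?K)"
    then have S[measurable]: "S \<in> sets (Z1 \<Otimes>\<^sub>M W)"
      by (simp add: sets_bind'[OF A_space K])
    have "emeasure (?A \<bind> ?K) S = (\<integral>\<^sup>+ z. emeasure (?K z) S \<partial>?A)"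
      by (rule emeasure_bind_prob_algebra[OF A_space K S])
    also have "\<dots> = (\<integral>\<^sup>+ z. (\<integral>\<^sup>+ w. b z w * indicator S (fst z, w) \<partial>W) \<partial>?A)"
    proof (rule nn_integral_cong)
      fix z assume "z \<in> space ?A"
      then have z[measurable]: "z \<in> space (Z1 \<Otimes>\<^sub>M Z2)" by simp
      have "prob_space (density W (b z))"
        by (rule prob_space_density_kernel[OF B B_density z])
      moreover have "fst z \<in> space Z1"
        using z by (auto simp: space_pair_measure)
      moreover have "b z \<in> borel_measurable W"
        by measurable
      ultimately show "emeasure (?K z) S = (\<integral>\<^sup>+ w. b z w * indicator S (fst z, w) \<partial>W)"
        by (simp add: B_density[OF z] emeasure_bind_density_return_Pair)
    qed
    also have "\<dots> = (\<integral>\<^sup>+ z. a z * (\<integral>\<^sup>+ w. b z w * indicator S (fst z, w) \<partial>W) \<partial>(Z1 \<Otimes>\<^sub>M Z2))"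
      by (rule nn_integral_density)
        (measurable, rule sigma_finite_measure.borel_measurable_nn_integral[OF W], measurable)
    also have "\<dots> = emeasure (density (Z1 \<Otimes>\<^sub>M W) (release_density Z2 a b)) S"
      by (simp add: nn_integral_release_density[OF Z2 W a b] emeasure_density)
    finally show "emeasure (?A \<bind> ?K) S = emeasure (density (Z1 \<Otimes>\<^sub>M W) (release_density Z2 a b)) S" .
  qed (simp add: sets_bind'[OF A_space K])
  show "prob_space (density (Z1 \<Otimes>\<^sub>M W) (release_density Z2 a b))"
    using prob_space_bind'[OF A_space K] by (simp add: eq)
qed

lemma prob_space_marginal_density:
  assumes "sigma_finite_measure N" and [measurable]: "a \<in> borel_measurable (M \<Otimes>\<^sub>M N)"
    and "prob_space (density (M \<Otimes>\<^sub>M N) a)"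
  shows "prob_space (density M (marginal_density N a))"
  using prob_space.prob_space_distr[OF assms(3), of fst M]
  by (simp add: distr_fst_density[OF assms(1,2)])

text \<open>Conditionally on z1 the two releases are mixtures of the same kernel b (z1, _) with mixing
  densities a (z1, _) and a' (z1, _), so the mixture bound applies fibrewise.\<close>
lemma nn_integral_renyi_integrand_release_le:
  assumes \<alpha>: "\<alpha> > 1" and Z2: "sigma_finite_measure Z2" and W: "sigma_finite_measure W"
    and a[measurable]: "a \<in> borel_measurable (Z1 \<Otimes>\<^sub>M Z2)"
    and a'[measurable]: "a' \<in> borel_measurable (Z1 \<Otimes>\<^sub>M Z2)"
    and b: "case_prod b \<in> borel_measurable ((Z1 \<Otimes>\<^sub>M Z2) \<Otimes>\<^sub>M W)"
    and A: "prob_space (density (Z1 \<Otimes>\<^sub>M Z2) a)" and A': "prob_space (density (Z1 \<Otimes>\<^sub>M Z2) a')"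
    and b_prob: "\<And>z. z \<in> space (Z1 \<Otimes>\<^sub>M Z2) \<Longrightarrow> prob_space (density W (b z))"
    and b_bound: "\<And>z1 s t. z1 \<in> space Z1 \<Longrightarrow> s \<in> space Z2 \<Longrightarrow> t \<in> space Z2 \<Longrightarrow>
      (\<integral>\<^sup>+ w. renyi_integrand \<alpha> (b (z1, s) w) (b (z1, t) w) \<partial>W) \<le> C"
    and C: "C \<noteq> 0"
  shows "(\<integral>\<^sup>+ x. renyi_integrand \<alpha> (release_density Z2 a b x) (release_density Z2 a' b x) \<partial>(Z1 \<Otimes>\<^sub>M W))
    \<le> C * (\<integral>\<^sup>+ z1. renyi_integrand \<alpha> (marginal_density Z2 a z1) (marginal_density Z2 a' z1) \<partial>Z1)"
proof -
  interpret W: sigma_finite_measure W by (fact W)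
  note [measurable] = borel_measurable_case_prod_compose[OF b]
  have [measurable]: "release_density Z2 a b \<in> borel_measurable (Z1 \<Otimes>\<^sub>M W)"
    "release_density Z2 a' b \<in> borel_measurable (Z1 \<Otimes>\<^sub>M W)"
    by (rule borel_measurable_release_density[OF Z2 _ b]; measurable)+
  have marginal[measurable]:
    "marginal_density Z2 a \<in> borel_measurable Z1" "marginal_density Z2 a' \<in> borel_measurable Z1"
    by (rule borel_measurable_marginal_density[OF Z2]; measurable)+
  have fin: "AE z1 in Z1. marginal_density Z2 a z1 \<noteq> \<infinity>" "AE z1 in Z1. marginal_density Z2 a' z1 \<noteq> \<infinity>"
    by (rule AE_finite_if_prob_space_density[OF marginal(1) prob_space_marginal_density[OF Z2 a A]]
        AE_finite_if_prob_space_density[OF marginal(2) prob_space_marginal_density[OF Z2 a' A']])+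
  have fibre: "(\<integral>\<^sup>+ w. renyi_integrand \<alpha> (release_density Z2 a b (z1, w)) (release_density Z2 a' b (z1, w)) \<partial>W)
      \<le> C * renyi_integrand \<alpha> (marginal_density Z2 a z1) (marginal_density Z2 a' z1)"
    if z1[measurable]: "z1 \<in> space Z1" and "marginal_density Z2 a z1 \<noteq> \<infinity>"
      "marginal_density Z2 a' z1 \<noteq> \<infinity>" for z1
    unfolding release_density_def marginal_density_def fst_conv snd_conv
  proof (rule nn_integral_renyi_integrand_mixture_le[OF \<alpha> Z2 W _ _ _ _ _ C])
    show "(\<integral>\<^sup>+ w. b (z1, s) w \<partial>W) = 1" if "s \<in> space Z2" for s
      using that z1 by (intro nn_integral_eq_1_if_prob_space_density b_prob)
        (measurable, simp add: space_pair_measure)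
  qed (use that in \<open>simp_all add: b_bound marginal_density_def\<close>, measurable)
  have "(\<integral>\<^sup>+ x. renyi_integrand \<alpha> (release_density Z2 a b x) (release_density Z2 a' b x) \<partial>(Z1 \<Otimes>\<^sub>M W))
      = (\<integral>\<^sup>+ z1. \<integral>\<^sup>+ w. renyi_integrand \<alpha> (release_density Z2 a b (z1, w)) (release_density Z2 a' b (z1, w)) \<partial>W \<partial>Z1)"
    by (rule W.nn_integral_fst[symmetric]) measurable
  also have "\<dots> \<le> (\<integral>\<^sup>+ z1. C * renyi_integrand \<alpha> (marginal_density Z2 a z1) (marginal_density Z2 a' z1) \<partial>Z1)"
    using fin AE_space by (intro nn_integral_mono_AE, eventually_elim) (rule fibre)
  also have "\<dots> = C * (\<integral>\<^sup>+ z1. renyi_integrand \<alpha> (marginal_density Z2 a z1) (marginal_density Z2 a' z1) \<partial>Z1)"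
    by (rule nn_integral_cmult) measurable
  finally show ?thesis .
qed

lemma renyi_div_release_le:
  assumes \<alpha>: "\<alpha> > 1" and Z2: "sigma_finite_measure Z2" and W: "sigma_finite_measure W"
    and a[measurable]: "a \<in> borel_measurable (Z1 \<Otimes>\<^sub>M Z2)"
    and a'[measurable]: "a' \<in> borel_measurable (Z1 \<Otimes>\<^sub>M Z2)"
    and A: "prob_space (density (Z1 \<Otimes>\<^sub>M Z2) a)" and A': "prob_space (density (Z1 \<Otimes>\<^sub>M Z2) a')"
    and B[measurable]: "B \<in> Z1 \<Otimes>\<^sub>M Z2 \<rightarrow>\<^sub>M prob_algebra W"
    and B_density: "\<And>z. z \<in> space (Z1 \<Otimes>\<^sub>M Z2) \<Longrightarrow> B z = density W (b z)"
    and b: "case_prod b \<in> borel_measurable ((Z1 \<Otimes>\<^sub>M Z2) \<Otimes>\<^sub>M W)"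
    and A1_rdp: "renyi_div \<alpha> (distr (density (Z1 \<Otimes>\<^sub>M Z2) a) Z1 fst)
      (distr (density (Z1 \<Otimes>\<^sub>M Z2) a') Z1 fst) \<le> ereal \<epsilon>1"
    and B_rdp: "\<And>z1 z2 z2'. z1 \<in> space Z1 \<Longrightarrow> z2 \<in> space Z2 \<Longrightarrow> z2' \<in> space Z2 \<Longrightarrow>
      renyi_div \<alpha> (B (z1, z2)) (B (z1, z2')) \<le> ereal \<epsilon>2"
  shows "renyi_div \<alpha>
      (density (Z1 \<Otimes>\<^sub>M Z2) a \<bind> (\<lambda>z. B z \<bind> (\<lambda>w. return (Z1 \<Otimes>\<^sub>M W) (fst z, w))))
      (density (Z1 \<Otimes>\<^sub>M Z2) a' \<bind> (\<lambda>z. B z \<bind> (\<lambda>w. return (Z1 \<Otimes>\<^sub>M W) (fst z, w))))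
    \<le> ereal (\<epsilon>1 + \<epsilon>2)"
proof -
  note [measurable] = borel_measurable_case_prod_compose[OF b]
  have [measurable]: "release_density Z2 a b \<in> borel_measurable (Z1 \<Otimes>\<^sub>M W)"
    "release_density Z2 a' b \<in> borel_measurable (Z1 \<Otimes>\<^sub>M W)"
    by (rule borel_measurable_release_density[OF Z2 _ b]; measurable)+
  have [measurable]: "marginal_density Z2 a \<in> borel_measurable Z1" "marginal_density Z2 a' \<in> borel_measurable Z1"
    by (rule borel_measurable_marginal_density[OF Z2]; measurable)+
  have B_prob: "prob_space (density W (b z))" if "z \<in> space (Z1 \<Otimes>\<^sub>M Z2)" for z
    by (rule prob_space_density_kernel[OF B B_density that])
  have "(\<integral>\<^sup>+ x. renyi_integrand \<alpha> (release_density Z2 a b x) (release_density Z2 a' b x) \<partial>(Z1 \<Otimes>\<^sub>M W))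
    \<le> ennreal (exp ((\<alpha> - 1) * \<epsilon>2))
      * (\<integral>\<^sup>+ z1. renyi_integrand \<alpha> (marginal_density Z2 a z1) (marginal_density Z2 a' z1) \<partial>Z1)"
  proof (rule nn_integral_renyi_integrand_release_le[OF \<alpha> Z2 W a a' b A A' B_prob])
    show "(\<integral>\<^sup>+ w. renyi_integrand \<alpha> (b (z1, s) w) (b (z1, t) w) \<partial>W) \<le> ennreal (exp ((\<alpha> - 1) * \<epsilon>2))"
      if [measurable]: "z1 \<in> space Z1" "s \<in> space Z2" "t \<in> space Z2" for z1 s t
    proof -
      have zs: "(z1, s) \<in> space (Z1 \<Otimes>\<^sub>M Z2)" "(z1, t) \<in> space (Z1 \<Otimes>\<^sub>M Z2)"
        using that by (simp_all add: space_pair_measure)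
      have "b (z1, s) \<in> borel_measurable W" "b (z1, t) \<in> borel_measurable W"
        by measurable
      from renyi_div_density_le_iff[OF \<alpha> this B_prob[OF zs(1)] B_prob[OF zs(2)]] show ?thesis
        using B_rdp[OF that] by (simp add: B_density zs)
    qed
  qed simp_all
  also have "\<dots> \<le> ennreal (exp ((\<alpha> - 1) * \<epsilon>2)) * ennreal (exp ((\<alpha> - 1) * \<epsilon>1))"
    using A1_rdp prob_space_marginal_density[OF Z2 a A] prob_space_marginal_density[OF Z2 a' A']
    by (intro mult_left_mono) (simp_all add: distr_fst_density[OF Z2] renyi_div_density_le_iff[OF \<alpha>])
  also have "\<dots> = ennreal (exp ((\<alpha> - 1) * (\<epsilon>1 + \<epsilon>2)))"
    by (simp add: ennreal_mult'[symmetric] exp_add[symmetric] algebra_simps)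
  finally show ?thesis
    using bind_density_release_density[OF Z2 W a A B B_density b]
      bind_density_release_density[OF Z2 W a' A' B B_density b]
    by (simp add: renyi_div_density_le_iff[OF \<alpha>])
qed

theorem theoremB1:
  fixes \<alpha> \<epsilon>1 \<epsilon>2 :: real
    and adj :: "'d \<Rightarrow> 'd \<Rightarrow> bool"
    and Z1 :: "'z1 measure" and Z2 :: "'z2 measure" and W :: "'w measure"
    and A :: "'d \<Rightarrow> ('z1 \<times> 'z2) measure"
    and a :: "'d \<Rightarrow> 'z1 \<times> 'z2 \<Rightarrow> ennreal"
    and B :: "'z1 \<times> 'z2 \<Rightarrow> 'w measure"
    and b :: "'z1 \<times> 'z2 \<Rightarrow> 'w \<Rightarrow> ennreal"
  assumes alpha: "\<alpha> > 1"
    and adj_sym: "\<And>D D'. adj D D' \<Longrightarrow> adj D' D"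
    and Z1: "sigma_finite_measure Z1" and Z2: "sigma_finite_measure Z2"
    and W: "sigma_finite_measure W"
    and A_prob: "\<And>D. prob_space (A D)"
    and A_dens: "\<And>D. A D = density (Z1 \<Otimes>\<^sub>M Z2) (a D)"
    and a_meas: "\<And>D. a D \<in> borel_measurable (Z1 \<Otimes>\<^sub>M Z2)"
    and B_kernel: "B \<in> Z1 \<Otimes>\<^sub>M Z2 \<rightarrow>\<^sub>M prob_algebra W"
    and B_dens: "\<And>z. z \<in> space (Z1 \<Otimes>\<^sub>M Z2) \<Longrightarrow> B z = density W (b z)"
    and b_meas: "case_prod b \<in> borel_measurable ((Z1 \<Otimes>\<^sub>M Z2) \<Otimes>\<^sub>M W)"
    and A1_rdp: "\<And>D D'. adj D D' \<Longrightarrow>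
        renyi_div \<alpha> (distr (A D) Z1 fst) (distr (A D') Z1 fst) \<le> ereal \<epsilon>1"
    and B_rdp: "\<And>z1 z2 z2'. z1 \<in> space Z1 \<Longrightarrow> z2 \<in> space Z2 \<Longrightarrow> z2' \<in> space Z2 \<Longrightarrow>
        renyi_div \<alpha> (B (z1, z2)) (B (z1, z2')) \<le> ereal \<epsilon>2"
  shows "\<And>D D'. adj D D' \<Longrightarrow>
      renyi_div \<alpha>
        (A D \<bind> (\<lambda>z. B z \<bind> (\<lambda>w. return (Z1 \<Otimes>\<^sub>M W) (fst z, w))))
        (A D' \<bind> (\<lambda>z. B z \<bind> (\<lambda>w. return (Z1 \<Otimes>\<^sub>M W) (fst z, w))))
      \<le> ereal (\<epsilon>1 + \<epsilon>2)"
  unfolding A_dens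
  by (rule renyi_div_release_le[OF alpha Z2 W a_meas a_meas A_prob[unfolded A_dens]
        A_prob[unfolded A_dens] B_kernel B_dens b_meas A1_rdp[unfolded A_dens] B_rdp])

end
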